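(* Let $\mathcal{F}$ be a monotone feature. Then the ip-function generators $\sigma^{\mathcal{F}}=\varrho^{\mathcal{F}}$ are balanced: for every graph $G=(V,E)$, every two filtering functions $f,g:E\to\mathbb{R}$ and every $h>0$ with $\sup_{e\in E}|f(e)-g(e)|\le h$, one has $\sigma^{\mathcal{F}}_{(G,f)}(u-h,v+h)\le\sigma^{\mathcal{F}}_{(G,g)}(u,v)$ for all $(u,v)\in\Delta^+$.
   Context: Graphs are finite simple undirected graphs; a weighted graph is $(G,f)$ with $f:E\to\mathbb{R}$. For $u\in\mathbb{R}$, $G_u=(V_u,E_u)$ is the subgraph induced by the edge set $f^{-1}((-\infty,u])$, $G_{+\infty}=G$. Only subgraphs induced by edge sets are considered. $\Delta^+=\{(u,v)\in\mathbb{R}\times(\mathbb{R}\cup\{+\infty\}):u<v\}$, with $+\infty+h=+\infty$. A feature $\mathcal{F}$ assigns to every graph $H=(V_H,E_H)$ a function $2^{V_H\cup E_H}\to\{true,false\}$. It is monotone if (i) for any graphs $G'=(V',E')\subset G''$ and any $X\subseteq V'\cup E'$, $\mathcal{F}(X)=true$ in $G''$ implies $\mathcal{F}(X)=true$ in $G'$; and (ii) in any graph, for $Y\subset X$, $\mathcal{F}(X)=true$ implies $\mathcal{F}(Y)=true$. $X\subseteq V\cup E$ is an $\mathcal{F}$-set at level $w$ in $(G,f)$ if $X\subseteq V_w\cup E_w$ and $\mathcal{F}(X)=true$ in $G_w$; steady at $(u,v)$ if an $\mathcal{F}$-set at all levels $w\in[u,v]$; ranging at $(u,v)$ if an $\mathcal{F}$-set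 at some level $w\le u$ and some level $w'\ge v$. $\sigma^{\mathcal{F}}_{(G,f)}(u,v)$, $\varrho^{\mathcal{F}}_{(G,f)}(u,v)$ are the numbers of steady, resp. ranging, $\mathcal{F}$-sets at $(u,v)$ (for monotone $\mathcal{F}$ these coincide). An ip-function generator $p$ (a map assigning to each weighted graph a function $p_{(G,f)}:\Delta^+\to\mathbb{Z}$ satisfying the persistence inequalities, invariant under isomorphism of weighted graphs) is balanced if whenever $\psi:G\to G'$ is a graph isomorphism and $\sup_{e\in E}|f(e)-f'(\psi(e))|\le h$ with $h>0$, then $p_{(G,f)}(u-h,v+h)\le p_{(G',f')}(u,v)$ for all $(u,v)\in\Delta^+$; equivalently, the single-graph condition stated in the claim holds. *)

theory Defs
  imports "HOL-Analysis.Analysis" "HOL-Library.Extended_Real"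
begin

definition is_graph :: "'a set \<Rightarrow> 'a set set \<Rightarrow> bool" where
  "is_graph V E \<longleftrightarrow> finite V \<and>
     (\<forall>e\<in>E. \<exists>x y. x \<noteq> y \<and> e = {x, y} \<and> x \<in> V \<and> y \<in> V)"

definition elems :: "'a set \<Rightarrow> 'a set set \<Rightarrow> ('a + 'a set) set" where
  "elems V E = Inl ` V \<union> Inr ` E"

text \<open>A feature: for each graph (V,E), a predicate on subsets of V \<union> E.\<close>
type_synonym 'a feature = "'a set \<Rightarrow> 'a set set \<Rightarrow> ('a + 'a set) set \<Rightarrow> bool"

definition monotone_feature :: "'a feature \<Rightarrow> bool" where
  "monotone_feature F \<longleftrightarrow>
     (\<forall>V1 E1 V2 E2 X. is_graph V1 E1 \<and> is_graph V2 E2 \<and> V1 \<subseteq> V2 \<and> E1 \<subseteq> E2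
        \<and> X \<subseteq> elems V1 E1 \<and> F V2 E2 X \<longrightarrow> F V1 E1 X)
   \<and> (\<forall>V E X Y. Y \<subseteq> X \<and> F V E X \<longrightarrow> F V E Y)"

definition lvl_edges :: "'a set set \<Rightarrow> ('a set \<Rightarrow> real) \<Rightarrow> ereal \<Rightarrow> 'a set set" where
  "lvl_edges E f w = (if w = \<infinity> then E else {e \<in> E. ereal (f e) \<le> w})"

definition lvl_verts :: "'a set \<Rightarrow> 'a set set \<Rightarrow> ('a set \<Rightarrow> real) \<Rightarrow> ereal \<Rightarrow> 'a set" where
  "lvl_verts V E f w = (if w = \<infinity> then V else \<Union> (lvl_edges E f w))"

definition F_set_at :: "'a feature \<Rightarrow> 'a set \<Rightarrow> 'a set set \<Rightarrow> ('a set \<Rightarrow> real)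
    \<Rightarrow> ereal \<Rightarrow> ('a + 'a set) set \<Rightarrow> bool" where
  "F_set_at F V E f w X \<longleftrightarrow>
     X \<subseteq> elems (lvl_verts V E f w) (lvl_edges E f w) \<and>
     F (lvl_verts V E f w) (lvl_edges E f w) X"

text \<open>Levels range over \<real> \<union> {+\<infinity>}, i.e. ereal values different from -\<infinity>.\<close>
definition steady :: "'a feature \<Rightarrow> 'a set \<Rightarrow> 'a set set \<Rightarrow> ('a set \<Rightarrow> real)
    \<Rightarrow> real \<Rightarrow> ereal \<Rightarrow> ('a + 'a set) set \<Rightarrow> bool" where
  "steady F V E f u v X \<longleftrightarrow>
     (\<forall>w. w \<noteq> -\<infinity> \<and> ereal u \<le> w \<and> w \<le> v \<longrightarrow> F_set_at F V E f w X)"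

definition ranging :: "'a feature \<Rightarrow> 'a set \<Rightarrow> 'a set set \<Rightarrow> ('a set \<Rightarrow> real)
    \<Rightarrow> real \<Rightarrow> ereal \<Rightarrow> ('a + 'a set) set \<Rightarrow> bool" where
  "ranging F V E f u v X \<longleftrightarrow>
     (\<exists>w. w \<noteq> -\<infinity> \<and> w \<le> ereal u \<and> F_set_at F V E f w X) \<and>
     (\<exists>w'. w' \<noteq> -\<infinity> \<and> v \<le> w' \<and> F_set_at F V E f w' X)"

definition sigma :: "'a feature \<Rightarrow> 'a set \<Rightarrow> 'a set set \<Rightarrow> ('a set \<Rightarrow> real)
    \<Rightarrow> real \<Rightarrow> ereal \<Rightarrow> nat" where
  "sigma F V E f u v = card {X. X \<subseteq> elems V E \<and> steady F V E f u v X}"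

definition rho :: "'a feature \<Rightarrow> 'a set \<Rightarrow> 'a set set \<Rightarrow> ('a set \<Rightarrow> real)
    \<Rightarrow> real \<Rightarrow> ereal \<Rightarrow> nat" where
  "rho F V E f u v = card {X. X \<subseteq> elems V E \<and> ranging F V E f u v X}"

end

theory Submission
  imports Defs
begin

text \<open>Perturbing the weights by at most \<open>h\<close> makes every sublevel graph of \<open>g\<close> at level \<open>w\<close>
  a subgraph of the sublevel graph of \<open>f\<close> at level \<open>w + h\<close>. By monotonicity of the feature,
  an \<open>F\<close>-set of \<open>(G, f)\<close> at all levels of \<open>[u - h, v + h]\<close> is therefore an \<open>F\<close>-set of
  \<open>(G, g)\<close> at all levels of \<open>[u, v]\<close>, so steady sets at \<open>(u - h, v + h)\<close> for \<open>f\<close> are steady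
  at \<open>(u, v)\<close> for \<open>g\<close>. For a monotone feature an \<open>F\<close>-set at levels \<open>w \<le> w'\<close> is an \<open>F\<close>-set at
  every level in between, so ranging and steady sets coincide and the bound for \<open>\<rho>\<close> is the
  bound for \<open>\<sigma>\<close>.\<close>

lemma monotone_featureD:
  assumes "monotone_feature F" "is_graph V1 E1" "is_graph V2 E2" "V1 \<subseteq> V2" "E1 \<subseteq> E2"
    "X \<subseteq> elems V1 E1" "F V2 E2 X"
  shows "F V1 E1 X"
  using assms unfolding monotone_feature_def by blast

lemma elems_mono: "V1 \<subseteq> V2 \<Longrightarrow> E1 \<subseteq> E2 \<Longrightarrow> elems V1 E1 \<subseteq> elems V2 E2"
  unfolding elems_def by auto

lemma finite_elems:
  assumes "is_graph V E"
  shows "finite (elems V E)"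
proof -
  have "finite V" and "E \<subseteq> Pow V"
    using assms unfolding is_graph_def by auto
  then show ?thesis
    unfolding elems_def by (simp add: finite_subset)
qed

lemma lvl_verts_subset:
  assumes "is_graph V E"
  shows "lvl_verts V E f w \<subseteq> V"
  using assms unfolding is_graph_def lvl_edges_def lvl_verts_def by auto

lemma is_graph_lvl:
  assumes "is_graph V E"
  shows "is_graph (lvl_verts V E f w) (lvl_edges E f w)"
  unfolding is_graph_def
proof
  show "finite (lvl_verts V E f w)"
    using assms lvl_verts_subset[OF assms] unfolding is_graph_def by (blast intro: finite_subset)
  show "\<forall>e\<in>lvl_edges E f w. \<exists>x y. x \<noteq> y \<and> e = {x, y} \<and>
          x \<in> lvl_verts V E f w \<and> y \<in> lvl_verts V E f w"
    using assms unfolding is_graph_def lvl_verts_def lvl_edges_def by (cases "w = \<infinity>") fastforce+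
qed

lemma lvl_edges_mono: "w \<le> w' \<Longrightarrow> lvl_edges E f w \<subseteq> lvl_edges E f w'"
  unfolding lvl_edges_def by (auto intro: order_trans)

lemma lvl_verts_mono:
  assumes "is_graph V E" "w \<le> w'"
  shows "lvl_verts V E f w \<subseteq> lvl_verts V E f w'"
  using lvl_verts_subset[OF assms(1), of f w] lvl_edges_mono[OF assms(2), of E f] assms(2)
  by (cases "w' = \<infinity>") (auto simp: lvl_verts_def)

lemma lvl_edges_shift:
  assumes "\<forall>e\<in>E. f e \<le> g e + h"
  shows "lvl_edges E g w \<subseteq> lvl_edges E f (w + ereal h)"
  using assms by (cases w) (force simp: lvl_edges_def)+

lemma lvl_verts_shift:
  assumes "\<forall>e\<in>E. f e \<le> g e + h"
  shows "lvl_verts V E g w \<subseteq> lvl_verts V E f (w + ereal h)"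
  using lvl_edges_shift[OF assms, of w] by (cases w) (auto simp: lvl_verts_def)

lemma F_set_at_subgraph:
  assumes "monotone_feature F" "is_graph V E"
    and "lvl_verts V E g w \<subseteq> lvl_verts V E f w'" "lvl_edges E g w \<subseteq> lvl_edges E f w'"
    and "X \<subseteq> elems (lvl_verts V E g w) (lvl_edges E g w)"
    and "F_set_at F V E f w' X"
  shows "F_set_at F V E g w X"
  using assms monotone_featureD[OF assms(1) is_graph_lvl is_graph_lvl]
  unfolding F_set_at_def by blast

lemma F_set_at_elems_mono:
  assumes "is_graph V E" "w \<le> w'" "F_set_at F V E f w X"
  shows "X \<subseteq> elems (lvl_verts V E f w') (lvl_edges E f w')"
  using assms elems_mono[OF lvl_verts_mono lvl_edges_mono]
  unfolding F_set_at_def by blast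

lemma steady_shift:
  assumes mon: "monotone_feature F" and G: "is_graph V E" and "h \<ge> 0"
    and fg_close: "\<forall>e\<in>E. \<bar>f e - g e\<bar> \<le> h"
    and steady_f: "steady F V E f (u - h) (v + ereal h) X"
  shows "steady F V E g u v X"
  unfolding steady_def
proof (intro allI impI)
  fix w assume w: "w \<noteq> -\<infinity> \<and> ereal u \<le> w \<and> w \<le> v"
  have f_le: "\<forall>e\<in>E. f e \<le> g e + h" and g_le: "\<forall>e\<in>E. g e \<le> f e + h"
    using fg_close by auto
  have "ereal u \<le> v"
    using w by (meson order_trans)
  then have "ereal (u - h) \<le> v + ereal h"
    using \<open>h \<ge> 0\<close> by (cases v) auto
  then have "F_set_at F V E f (ereal (u - h)) X"
    using steady_f unfolding steady_def by simp
  then have "X \<subseteq> elems (lvl_verts V E f (ereal (u - h))) (lvl_edges E f (ereal (u - h)))"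
    unfolding F_set_at_def by blast
  also have "\<dots> \<subseteq> elems (lvl_verts V E g (ereal (u - h) + ereal h))
      (lvl_edges E g (ereal (u - h) + ereal h))"
    by (intro elems_mono lvl_verts_shift lvl_edges_shift g_le)
  also have "\<dots> = elems (lvl_verts V E g (ereal u)) (lvl_edges E g (ereal u))"
    by simp
  also have "\<dots> \<subseteq> elems (lvl_verts V E g w) (lvl_edges E g w)"
    using w elems_mono[OF lvl_verts_mono[OF G] lvl_edges_mono] by blast
  finally have X: "X \<subseteq> elems (lvl_verts V E g w) (lvl_edges E g w)" .
  have "w + ereal h \<noteq> -\<infinity>"
    using w by (cases w) auto
  moreover have "ereal (u - h) \<le> w + ereal h"
    using w \<open>h \<ge> 0\<close> by (cases w) auto
  moreover have "w + ereal h \<le> v + ereal h"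
    using w by (simp add: add_right_mono)
  ultimately have "F_set_at F V E f (w + ereal h) X"
    using steady_f unfolding steady_def by blast
  then show "F_set_at F V E g w X"
    using F_set_at_subgraph[OF mon G lvl_verts_shift[OF f_le] lvl_edges_shift[OF f_le] X] by blast
qed

lemma ranging_imp_steady:
  assumes mon: "monotone_feature F" and G: "is_graph V E"
    and "ranging F V E f a b X"
  shows "steady F V E f a b X"
  unfolding steady_def
proof (intro allI impI)
  fix t assume t: "t \<noteq> -\<infinity> \<and> ereal a \<le> t \<and> t \<le> b"
  obtain w w' where "w \<le> ereal a" "F_set_at F V E f w X"
    and "b \<le> w'" "F_set_at F V E f w' X"
    using assms(3) unfolding ranging_def by blast
  moreover from this t have "w \<le> t" "t \<le> w'"
    by (meson order_trans)+
  ultimately show "F_set_at F V E f t X"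
    using F_set_at_subgraph[OF mon G lvl_verts_mono[OF G] lvl_edges_mono F_set_at_elems_mono[OF G]]
    by blast
qed

lemma steady_imp_ranging:
  assumes "ereal a \<le> b" "steady F V E f a b X"
  shows "ranging F V E f a b X"
  using assms unfolding steady_def ranging_def by force

lemma rho_eq_sigma:
  assumes "monotone_feature F" "is_graph V E" "ereal a \<le> b"
  shows "rho F V E f a b = sigma F V E f a b"
  unfolding rho_def sigma_def
  using ranging_imp_steady[OF assms(1,2)] steady_imp_ranging[OF assms(3)] by metis

lemma sigma_shift_le:
  assumes "monotone_feature F" "is_graph V E" "h \<ge> 0" "\<forall>e\<in>E. \<bar>f e - g e\<bar> \<le> h"
  shows "sigma F V E f (u - h) (v + ereal h) \<le> sigma F V E g u v"
  unfolding sigma_def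
  using finite_elems[OF assms(2)] steady_shift[OF assms]
  by (intro card_mono) (auto intro: finite_subset)

theorem proposition4:
  fixes F :: "'a feature" and V :: "'a set" and E :: "'a set set"
    and f g :: "'a set \<Rightarrow> real" and h u :: real and v :: ereal
  assumes "monotone_feature F"
    and "is_graph V E"
    and "h > 0"
    and "\<forall>e\<in>E. \<bar>f e - g e\<bar> \<le> h"
    and "ereal u < v"
  shows "sigma F V E f (u - h) (v + ereal h) \<le> sigma F V E g u v
       \<and> rho F V E f (u - h) (v + ereal h) \<le> rho F V E g u v"
proof -
  have sigma_le: "sigma F V E f (u - h) (v + ereal h) \<le> sigma F V E g u v"
    using sigma_shift_le[OF assms(1,2) _ assms(4)] \<open>h > 0\<close> by simp
  have "ereal (u - h) \<le> v + ereal h"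
    using assms(3,5) by (cases v) auto
  then have "rho F V E f (u - h) (v + ereal h) = sigma F V E f (u - h) (v + ereal h)"
    using rho_eq_sigma[OF assms(1,2)] by blast
  moreover have "rho F V E g u v = sigma F V E g u v"
    using rho_eq_sigma[OF assms(1,2)] assms(5) by simp
  ultimately show ?thesis
    using sigma_le by simp
qed

end
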